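(* In the setting below, as $\mathcal{O}$-modules $\operatorname{coker}(\lambda_P(\mathbf{J}))\cong\mathcal{O}^{mn-(n-t)}\oplus T$, where $T$ is the torsion submodule, and $\operatorname{length}_{\mathcal{O}}T = (n-t)\,w_{\mathbf{a}}$.
   Context: Let $\mathcal{O}$ be a discrete valuation ring with uniformiser $\varpi$ and normalised valuation $\nu$. Let $2\le m\le n$, $t=m-1$, $P=\mathcal{O}[X_{m\times n}]$, $X_{[a,b]}$ the submatrix of columns $a$ through $b$ of the $m\times n$ matrix of indeterminates $X$, and $f_k=\det X_{[k,k+t]}$ for $1\le k\le n-t$. $\mathbf{J}$ is the $mn\times(n-t)$ Jacobian matrix with entries $\partial f_k/\partial X_{ij}$ (rows indexed by variables). Fix integers $0\le a_1\le\cdots\le a_t$, $D=\operatorname{diag}(\varpi^{a_1},\ldots,\varpi^{a_t})$, $\Delta=\det D$. Let $\mathbf{a}\in\mathcal{O}^{m\times n}$ have zero last row and top $t$ entries of column $j$ equal to the $r$-th column of $D$, where $1\le r\le t$, $r\equiv j\pmod t$. $\lambda_P\colon P\to\mathcal{O}$ is $X_{ij}\mapsto\mathbf{a}_{ij}$, and $\lambda_P(\mathbf{J})\colon\mathcal{O}^{n-t}\to\mathcal{O}^{mn}$ is the entrywise evaluated matrix. $w_{\mathbf{a}} = \nu(\Delta) = \operatorname{length}_{\mathcal{O}}(\mathcal{O}/\mathrm{I}_t(\mathbf{a}))$. *)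

theory Defs
  imports "HOL-Combinatorics.Permutations"
begin

definition dvr :: "'a::idom \<Rightarrow> bool" where
  "dvr pi \<longleftrightarrow> pi \<noteq> 0 \<and> \<not> pi dvd 1 \<and>
     (\<forall>x. x \<noteq> 0 \<longrightarrow> (\<exists>u k. u dvd 1 \<and> x = u * pi ^ k))"

definition val :: "'a::idom \<Rightarrow> 'a \<Rightarrow> nat" where
  "val pi x = (THE k. \<exists>u. u dvd 1 \<and> x = u * pi ^ k)"

text \<open>The free module O^I on a finite index set I: finitely supported functions on I.\<close>
definition free_mod :: "'i set \<Rightarrow> ('i \<Rightarrow> 'a::zero) set" where
  "free_mod I = {v. \<forall>x. x \<notin> I \<longrightarrow> v x = 0}"

definition mat_vec :: "'c set \<Rightarrow> ('r \<Rightarrow> 'c \<Rightarrow> 'a::comm_ring_1) \<Rightarrow> ('c \<Rightarrow> 'a) \<Rightarrow> 'r \<Rightarrow> 'a" where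
  "mat_vec C A x = (\<lambda>r. \<Sum>c\<in>C. A r c * x c)"

definition mat_image :: "'c set \<Rightarrow> ('r \<Rightarrow> 'c \<Rightarrow> 'a::comm_ring_1) \<Rightarrow> ('r \<Rightarrow> 'a) set" where
  "mat_image C A = {mat_vec C A x | x. x \<in> free_mod C}"

text \<open>Quotient module O^R / U, elements are cosets.\<close>
definition cls :: "('r \<Rightarrow> 'a::comm_ring_1) set \<Rightarrow> ('r \<Rightarrow> 'a) \<Rightarrow> ('r \<Rightarrow> 'a) set" where
  "cls U v = {(\<lambda>i. v i + w i) | w. w \<in> U}"

definition quot_carrier :: "'r set \<Rightarrow> ('r \<Rightarrow> 'a::comm_ring_1) set \<Rightarrow> ('r \<Rightarrow> 'a) set set" where
  "quot_carrier R U = cls U ` free_mod R"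

definition qrep :: "('r \<Rightarrow> 'a) set \<Rightarrow> 'r \<Rightarrow> 'a" where
  "qrep C = (SOME v. v \<in> C)"

definition qadd :: "('r \<Rightarrow> 'a::comm_ring_1) set \<Rightarrow> ('r \<Rightarrow> 'a) set \<Rightarrow> ('r \<Rightarrow> 'a) set \<Rightarrow> ('r \<Rightarrow> 'a) set" where
  "qadd U C D = cls U (\<lambda>i. qrep C i + qrep D i)"

definition qscale :: "('r \<Rightarrow> 'a::comm_ring_1) set \<Rightarrow> 'a \<Rightarrow> ('r \<Rightarrow> 'a) set \<Rightarrow> ('r \<Rightarrow> 'a) set" where
  "qscale U s C = cls U (\<lambda>i. s * qrep C i)"

definition qzero :: "('r \<Rightarrow> 'a::comm_ring_1) set \<Rightarrow> ('r \<Rightarrow> 'a) set" where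
  "qzero U = cls U (\<lambda>i. 0)"

definition coker :: "'r set \<Rightarrow> 'c set \<Rightarrow> ('r \<Rightarrow> 'c \<Rightarrow> 'a::comm_ring_1) \<Rightarrow> ('r \<Rightarrow> 'a) set set" where
  "coker R C A = quot_carrier R (mat_image C A)"

definition torsion_part :: "'r set \<Rightarrow> 'c set \<Rightarrow> ('r \<Rightarrow> 'c \<Rightarrow> 'a::comm_ring_1) \<Rightarrow> ('r \<Rightarrow> 'a) set set" where
  "torsion_part R C A =
     {X \<in> coker R C A. \<exists>s. s \<noteq> 0 \<and> qscale (mat_image C A) s X = qzero (mat_image C A)}"

definition mod_iso ::
  "'m set \<Rightarrow> ('m \<Rightarrow> 'm \<Rightarrow> 'm) \<Rightarrow> ('a \<Rightarrow> 'm \<Rightarrow> 'm) \<Rightarrow>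
   'n set \<Rightarrow> ('n \<Rightarrow> 'n \<Rightarrow> 'n) \<Rightarrow> ('a \<Rightarrow> 'n \<Rightarrow> 'n) \<Rightarrow> bool" where
  "mod_iso M addM scM N addN scN \<longleftrightarrow>
     (\<exists>\<phi>. bij_betw \<phi> M N \<and>
          (\<forall>x\<in>M. \<forall>y\<in>M. \<phi> (addM x y) = addN (\<phi> x) (\<phi> y)) \<and>
          (\<forall>s. \<forall>x\<in>M. \<phi> (scM s x) = scN s (\<phi> x)))"

definition submod ::
  "'m set \<Rightarrow> ('m \<Rightarrow> 'm \<Rightarrow> 'm) \<Rightarrow> ('a \<Rightarrow> 'm \<Rightarrow> 'm) \<Rightarrow> 'm \<Rightarrow> 'm set \<Rightarrow> bool" where
  "submod M add sc z S \<longleftrightarrow> S \<subseteq> M \<and> z \<in> S \<and>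
     (\<forall>x\<in>S. \<forall>y\<in>S. add x y \<in> S) \<and> (\<forall>s. \<forall>x\<in>S. sc s x \<in> S)"

definition submod_chain ::
  "'m set \<Rightarrow> ('m \<Rightarrow> 'm \<Rightarrow> 'm) \<Rightarrow> ('a \<Rightarrow> 'm \<Rightarrow> 'm) \<Rightarrow> 'm \<Rightarrow> (nat \<Rightarrow> 'm set) \<Rightarrow> nat \<Rightarrow> bool" where
  "submod_chain M add sc z S l \<longleftrightarrow>
     (\<forall>i\<le>l. submod M add sc z (S i)) \<and> (\<forall>i<l. S i \<subset> S (Suc i))"

definition has_length ::
  "'m set \<Rightarrow> ('m \<Rightarrow> 'm \<Rightarrow> 'm) \<Rightarrow> ('a \<Rightarrow> 'm \<Rightarrow> 'm) \<Rightarrow> 'm \<Rightarrow> nat \<Rightarrow> bool" where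
  "has_length M add sc z l \<longleftrightarrow>
     (\<exists>S. submod_chain M add sc z S l) \<and> (\<forall>S k. submod_chain M add sc z S k \<longrightarrow> k \<le> l)"

text \<open>The point a in O^(m x n) (1-based indices, t = m - 1): last row zero; the top t entries
of column j are the r-th column of D = diag(pi^e_1,...,pi^e_t), r = ((j-1) mod t) + 1.\<close>
definition pt :: "'a::comm_ring_1 \<Rightarrow> nat \<Rightarrow> (nat \<Rightarrow> nat) \<Rightarrow> nat \<Rightarrow> nat \<Rightarrow> 'a" where
  "pt pi m e i j = (if 1 \<le> i \<and> i < m \<and> i = (j - 1) mod (m - 1) + 1 then pi ^ e i else 0)"

text \<open>Evaluation at a point P of the partial derivative with respect to X_ij of
f_k = det X_[k,k+t] = sum over sigma permuting {1..m} of sign sigma * prod_i' X_(i', k + sigma i' - 1)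
(Leibniz formula). Since each monomial contains X_ij at most once (with exponent 1), the
derivative is the sum over those sigma with k + sigma i - 1 = j of the product over i' ~= i.
Rows are indexed by variables (i,j), columns by k in {1..n-t}; entries outside are 0.\<close>
definition jac_eval :: "nat \<Rightarrow> nat \<Rightarrow> (nat \<Rightarrow> nat \<Rightarrow> 'a::comm_ring_1) \<Rightarrow> nat \<times> nat \<Rightarrow> nat \<Rightarrow> 'a" where
  "jac_eval m n P ij k =
     (case ij of (i, j) \<Rightarrow>
       if i \<in> {1..m} \<and> j \<in> {1..n} \<and> k \<in> {1..n - (m - 1)} then
         (\<Sum>\<sigma> \<in> {\<sigma>. \<sigma> permutes {1..m} \<and> k + \<sigma> i - 1 = j}.
            of_int (sign \<sigma>) * (\<Prod>i' \<in> {1..m} - {i}. P i' (k + \<sigma> i' - 1)))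
       else 0)"

end

theory Submission
  imports Defs
begin

text \<open>At the point \<open>a\<close> only the last row of the Jacobian survives: the entry for \<open>X\<^sub>m\<^sub>j\<close>
  and \<open>f\<^sub>k\<close> is \<open>\<Delta>\<close> times a signed count of permutations, which vanishes unless \<open>j = k\<close> or
  \<open>j = k + t\<close> and is a unit for \<open>j = k\<close>.  So \<open>J = \<Delta> Jred\<close>, where \<open>Jred\<close> is unitriangular on the
  rows \<open>(m, j)\<close>, \<open>j \<in> C\<close>.  Hence \<open>O\<^sup>m\<^sup>n\<close> is the direct sum of the image of \<open>Jred\<close> and the
  coordinates outside \<open>{m} \<times> C\<close>, and the image of \<open>J\<close> is \<open>\<Delta>\<close> times the first summand: the
  cokernel is free on the \<open>m n - (n - t)\<close> remaining coordinates plus a torsion part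
  \<open>(O/\<Delta>)\<^sup>n\<^sup>-\<^sup>t\<close>.  The torsion part has length \<open>(n - t) \<nu>(\<Delta>)\<close>: the submodules of
  \<open>O\<^sup>n\<^sup>-\<^sup>t\<close> given by coordinatewise valuation bounds, lowered one unit at a time, form a
  chain of covers from \<open>\<Delta> O\<^sup>n\<^sup>-\<^sup>t\<close> to \<open>O\<^sup>n\<^sup>-\<^sup>t\<close>, and by the modular law no chain of
  submodules in between is longer.\<close>

section \<open>Submodules of coordinate modules\<close>

definition is_submodule :: "('i \<Rightarrow> 'a::comm_ring_1) set \<Rightarrow> bool" where
  "is_submodule W \<longleftrightarrow> (\<lambda>i. 0) \<in> W \<and> (\<forall>x\<in>W. \<forall>y\<in>W. (\<lambda>i. x i + y i) \<in> W) \<and>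
     (\<forall>s. \<forall>x\<in>W. (\<lambda>i. s * x i) \<in> W)"

definition submodule_sum :: "('i \<Rightarrow> 'a::comm_ring_1) set \<Rightarrow> ('i \<Rightarrow> 'a) set \<Rightarrow> ('i \<Rightarrow> 'a) set" where
  "submodule_sum A B = {(\<lambda>i. a i + b i) | a b. a \<in> A \<and> b \<in> B}"

lemma is_submoduleD:
  assumes "is_submodule W"
  shows is_submodule_zero: "(\<lambda>i. 0) \<in> W"
    and is_submodule_add: "x \<in> W \<Longrightarrow> y \<in> W \<Longrightarrow> (\<lambda>i. x i + y i) \<in> W"
    and is_submodule_scale: "x \<in> W \<Longrightarrow> (\<lambda>i. s * x i) \<in> W"
  using assms unfolding is_submodule_def by blast+

lemma is_submodule_diff:
  assumes "is_submodule W" "x \<in> W" "y \<in> W"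
  shows "(\<lambda>i. x i - y i) \<in> W"
  using is_submodule_add[OF assms(1,2) is_submodule_scale[OF assms(1,3), of "-1"]] by simp

lemma is_submodule_Int: "is_submodule A \<Longrightarrow> is_submodule B \<Longrightarrow> is_submodule (A \<inter> B)"
  unfolding is_submodule_def by blast

lemma is_submodule_sum:
  assumes W: "is_submodule W" and "finite A" "\<And>a. a \<in> A \<Longrightarrow> f a \<in> W"
  shows "(\<lambda>x. \<Sum>a\<in>A. f a x) \<in> W"
  using assms(2,3)
proof (induction A rule: finite_induct)
  case empty
  then show ?case using is_submodule_zero[OF W] by simp
next
  case (insert a A)
  then show ?case using is_submodule_add[OF W, of "f a" "\<lambda>x. \<Sum>a\<in>A. f a x"] by simp
qed

lemma is_submodule_free_mod: "is_submodule (free_mod I)"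
  unfolding is_submodule_def free_mod_def by auto

lemma mat_vec_add: "mat_vec C A (\<lambda>i. x i + y i) = (\<lambda>r. mat_vec C A x r + mat_vec C A y r)"
  unfolding mat_vec_def by (simp add: algebra_simps sum.distrib)

lemma mat_vec_scale: "mat_vec C A (\<lambda>i. s * x i) = (\<lambda>r. s * mat_vec C A x r)"
  unfolding mat_vec_def by (simp add: algebra_simps sum_distrib_left)

lemma mat_vec_diff: "mat_vec C A (\<lambda>i. x i - y i) = (\<lambda>r. mat_vec C A x r - mat_vec C A y r)"
  unfolding mat_vec_def by (simp add: algebra_simps sum_subtractf)

lemma mat_vec_zero: "mat_vec C A (\<lambda>i. 0) = (\<lambda>r. 0)"
  unfolding mat_vec_def by simp

lemma mat_vec_mem_mat_image: "x \<in> free_mod C \<Longrightarrow> mat_vec C A x \<in> mat_image C A"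
  unfolding mat_image_def by blast

lemma is_submodule_mat_image: "is_submodule (mat_image C A)"
  unfolding is_submodule_def mat_image_def
proof (intro conjI ballI allI)
  have "(\<lambda>i. 0) = mat_vec C A (\<lambda>i. 0)" by (simp add: mat_vec_zero)
  then show "(\<lambda>i. 0) \<in> {mat_vec C A x |x. x \<in> free_mod C}"
    using is_submodule_zero[OF is_submodule_free_mod] by blast
next
  fix u v assume "u \<in> {mat_vec C A x |x. x \<in> free_mod C}" "v \<in> {mat_vec C A x |x. x \<in> free_mod C}"
  then obtain x y where "u = mat_vec C A x" "v = mat_vec C A y" "x \<in> free_mod C" "y \<in> free_mod C"
    by blast
  moreover from this have "(\<lambda>i. u i + v i) = mat_vec C A (\<lambda>i. x i + y i)"
    by (simp add: mat_vec_add)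
  ultimately show "(\<lambda>i. u i + v i) \<in> {mat_vec C A x |x. x \<in> free_mod C}"
    using is_submodule_add[OF is_submodule_free_mod] by blast
next
  fix s u assume "u \<in> {mat_vec C A x |x. x \<in> free_mod C}"
  then obtain x where "u = mat_vec C A x" "x \<in> free_mod C"
    by blast
  moreover from this have "(\<lambda>i. s * u i) = mat_vec C A (\<lambda>i. s * x i)"
    by (simp add: mat_vec_scale)
  ultimately show "(\<lambda>i. s * u i) \<in> {mat_vec C A x |x. x \<in> free_mod C}"
    using is_submodule_scale[OF is_submodule_free_mod] by blast
qed

lemma submodule_sumI: "a \<in> A \<Longrightarrow> b \<in> B \<Longrightarrow> (\<lambda>i. a i + b i) \<in> submodule_sum A B"
  unfolding submodule_sum_def by blast

lemma submodule_sumE: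
  assumes "x \<in> submodule_sum A B"
  obtains a b where "a \<in> A" "b \<in> B" "x = (\<lambda>i. a i + b i)"
  using assms unfolding submodule_sum_def by blast

lemma is_submodule_submodule_sum:
  assumes A: "is_submodule A" and B: "is_submodule B"
  shows "is_submodule (submodule_sum A B)"
  unfolding is_submodule_def
proof (intro conjI ballI allI)
  show "(\<lambda>i. 0) \<in> submodule_sum A B"
    using submodule_sumI[OF is_submodule_zero[OF A] is_submodule_zero[OF B]] by simp
next
  fix x y assume x: "x \<in> submodule_sum A B" and y: "y \<in> submodule_sum A B"
  obtain a b where "a \<in> A" "b \<in> B" "x = (\<lambda>i. a i + b i)"
    using x by (rule submodule_sumE)
  moreover obtain a' b' where "a' \<in> A" "b' \<in> B" "y = (\<lambda>i. a' i + b' i)"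
    using y by (rule submodule_sumE)
  ultimately show "(\<lambda>i. x i + y i) \<in> submodule_sum A B"
    using submodule_sumI[OF is_submodule_add[OF A, of a a'] is_submodule_add[OF B, of b b']]
    by (simp add: algebra_simps)
next
  fix s x assume "x \<in> submodule_sum A B"
  then obtain a b where "a \<in> A" "b \<in> B" "x = (\<lambda>i. a i + b i)"
    by (rule submodule_sumE)
  then show "(\<lambda>i. s * x i) \<in> submodule_sum A B"
    using submodule_sumI[OF is_submodule_scale[OF A, of a s] is_submodule_scale[OF B, of b s]]
    by (simp add: algebra_simps)
qed

lemma submodule_sum_upper1:
  assumes "is_submodule B" shows "A \<subseteq> submodule_sum A B"
proof
  fix a assume "a \<in> A"
  then show "a \<in> submodule_sum A B"
    using submodule_sumI[OF _ is_submodule_zero[OF assms]] by fastforce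
qed

lemma submodule_sum_upper2:
  assumes "is_submodule A" shows "B \<subseteq> submodule_sum A B"
proof
  fix b assume "b \<in> B"
  then show "b \<in> submodule_sum A B"
    using submodule_sumI[OF is_submodule_zero[OF assms]] by fastforce
qed

lemma submodule_sum_least:
  assumes "is_submodule C" "A \<subseteq> C" "B \<subseteq> C" shows "submodule_sum A B \<subseteq> C"
proof
  fix x assume "x \<in> submodule_sum A B"
  then obtain a b where "a \<in> A" "b \<in> B" "x = (\<lambda>i. a i + b i)"
    by (rule submodule_sumE)
  then show "x \<in> C" using assms is_submodule_add[OF assms(1)] by blast
qed

lemma submodule_sum_mono: "A \<subseteq> A' \<Longrightarrow> submodule_sum A B \<subseteq> submodule_sum A' B"
  unfolding submodule_sum_def by blast

lemma submodule_eq_modular: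
  assumes W1: "is_submodule W1" and W2: "is_submodule W2" and M: "is_submodule M"
    and "W1 \<subseteq> W2" and "W1 \<inter> M = W2 \<inter> M" and "submodule_sum W1 M = submodule_sum W2 M"
  shows "W1 = W2"
proof
  show "W2 \<subseteq> W1"
  proof
    fix x assume x: "x \<in> W2"
    then have "x \<in> submodule_sum W1 M"
      using submodule_sum_upper1[OF M] assms(6) by blast
    then obtain a b where ab: "a \<in> W1" "b \<in> M" "x = (\<lambda>i. a i + b i)"
      by (rule submodule_sumE)
    have "b = (\<lambda>i. x i - a i)" using ab(3) by auto
    then have "b \<in> W2" using is_submodule_diff[OF W2 x] ab(1) assms(4) by blast
    then have "b \<in> W1" using ab(2) assms(5) by blast
    then show "x \<in> W1" using ab is_submodule_add[OF W1] by blast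
  qed
qed (fact assms(4))

lemma chain_mono_le:
  fixes W :: "nat \<Rightarrow> 'b::order"
  assumes "\<And>j. j < l \<Longrightarrow> W j \<le> W (Suc j)" "i \<le> j" "j \<le> l"
  shows "W i \<le> W j"
  by (rule lift_Suc_mono_le_ivl[of "{..<l}"]) (use assms in auto)

lemma card_steps_le_1_if_two_valued:
  fixes V :: "nat \<Rightarrow> 'b::order"
  assumes vals: "\<And>j. j \<le> l \<Longrightarrow> V j = a \<or> V j = b"
    and mono: "\<And>j. j < l \<Longrightarrow> V j \<le> V (Suc j)"
  shows "card {j. j < l \<and> V j \<noteq> V (Suc j)} \<le> 1"
proof -
  have "\<not> (j1 < j2 \<and> j2 < l \<and> V j1 \<noteq> V (Suc j1) \<and> V j2 \<noteq> V (Suc j2))" for j1 j2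
  proof
    assume j: "j1 < j2 \<and> j2 < l \<and> V j1 \<noteq> V (Suc j1) \<and> V j2 \<noteq> V (Suc j2)"
    have "V j1 < V (Suc j1)" "V j2 < V (Suc j2)" using mono j by (simp_all add: order.strict_iff_order)
    moreover have "V (Suc j1) \<le> V j2" using chain_mono_le[where W = V and l = l, OF mono, of "Suc j1" j2] j by simp
    ultimately have "V j1 < V j2" "V j2 < V (Suc j2)" by simp_all
    then show False using vals[of j1] vals[of j2] vals[of "Suc j2"] j by (auto dest: less_trans)
  qed
  then have "\<forall>x\<in>{j. j < l \<and> V j \<noteq> V (Suc j)}. \<forall>y\<in>{j. j < l \<and> V j \<noteq> V (Suc j)}. x = y"
    by (metis (mono_tags, lifting) mem_Collect_eq linorder_neqE_nat)
  then show ?thesis by (simp add: card_le_Suc0_iff_eq)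
qed

text \<open>Intersecting with and adding the penultimate term \<open>M L\<close> splits the proper steps, by the
  modular law, into those of a chain below \<open>M L\<close> and those of a chain taking only the values
  \<open>M L\<close> and \<open>M (Suc L)\<close>.\<close>
lemma card_steps_le_composition_length:
  assumes "\<And>i. i \<le> L \<Longrightarrow> is_submodule (M i)"
    and "\<And>i. i < L \<Longrightarrow> M i \<subseteq> M (Suc i)"
    and "\<And>i V. i < L \<Longrightarrow> is_submodule V \<Longrightarrow> M i \<subseteq> V \<Longrightarrow> V \<subseteq> M (Suc i) \<Longrightarrow>
           V = M i \<or> V = M (Suc i)"
    and "\<And>j. j \<le> l \<Longrightarrow> is_submodule (W j)"
    and "\<And>j. j \<le> l \<Longrightarrow> M 0 \<subseteq> W j \<and> W j \<subseteq> M L"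
    and "\<And>j. j < l \<Longrightarrow> W j \<subseteq> W (Suc j)"
  shows "card {j. j < l \<and> W j \<noteq> W (Suc j)} \<le> L"
  using assms
proof (induction L arbitrary: W)
  case 0
  have "W j = W (Suc j)" if "j < l" for j
    using "0.prems"(5)[of j] "0.prems"(5)[of "Suc j"] that by auto
  then show ?case by simp
next
  case (Suc L)
  define W' where "W' j = W j \<inter> M L" for j
  define V where "V j = submodule_sum (W j) (M L)" for j
  have M_L: "is_submodule (M L)" using Suc.prems(1) by simp
  have "M 0 \<subseteq> M L" using chain_mono_le[where W = M and l = L, of 0 L] Suc.prems(2) by simp
  moreover have "W' j \<subseteq> W' (Suc j)" if "j < l" for j
    using Suc.prems(6)[OF that] unfolding W'_def by blast
  ultimately have IH: "card {j. j < l \<and> W' j \<noteq> W' (Suc j)} \<le> L"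
    using Suc.prems(1-5) M_L unfolding W'_def by (intro Suc.IH) (auto intro: is_submodule_Int)
  have "V j = M L \<or> V j = M (Suc L)" if "j \<le> l" for j
  proof (rule Suc.prems(3))
    show "is_submodule (V j)"
      unfolding V_def using Suc.prems(4)[OF that] M_L by (rule is_submodule_submodule_sum)
    show "M L \<subseteq> V j"
      unfolding V_def using Suc.prems(4)[OF that] by (rule submodule_sum_upper2)
    show "V j \<subseteq> M (Suc L)"
      unfolding V_def by (rule submodule_sum_least[OF Suc.prems(1)[of "Suc L"]])
        (use Suc.prems(5)[OF that] Suc.prems(2)[of L] in auto)
  qed simp
  moreover have "V j \<subseteq> V (Suc j)" if "j < l" for j
    unfolding V_def using Suc.prems(6)[OF that] by (rule submodule_sum_mono)
  ultimately have V_steps: "card {j. j < l \<and> V j \<noteq> V (Suc j)} \<le> 1"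
    by (rule card_steps_le_1_if_two_valued)
  have "W j = W (Suc j)" if "j < l" "W' j = W' (Suc j)" "V j = V (Suc j)" for j
    using submodule_eq_modular[OF Suc.prems(4) Suc.prems(4) M_L Suc.prems(6)] that
    unfolding W'_def V_def by simp
  then have "{j. j < l \<and> W j \<noteq> W (Suc j)} \<subseteq>
      {j. j < l \<and> W' j \<noteq> W' (Suc j)} \<union> {j. j < l \<and> V j \<noteq> V (Suc j)}"
    by blast
  then have "card {j. j < l \<and> W j \<noteq> W (Suc j)} \<le>
      card ({j. j < l \<and> W' j \<noteq> W' (Suc j)} \<union> {j. j < l \<and> V j \<noteq> V (Suc j)})"
    by (rule card_mono[rotated]) simp
  also have "\<dots> \<le> card {j. j < l \<and> W' j \<noteq> W' (Suc j)} + card {j. j < l \<and> V j \<noteq> V (Suc j)}"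
    by (rule card_Un_le)
  finally show ?case using IH V_steps by linarith
qed

lemma strict_chain_length_le_composition_length:
  assumes "\<And>i. i \<le> L \<Longrightarrow> is_submodule (M i)"
    and "\<And>i. i < L \<Longrightarrow> M i \<subseteq> M (Suc i)"
    and "\<And>i V. i < L \<Longrightarrow> is_submodule V \<Longrightarrow> M i \<subseteq> V \<Longrightarrow> V \<subseteq> M (Suc i) \<Longrightarrow>
           V = M i \<or> V = M (Suc i)"
    and "\<And>j. j \<le> l \<Longrightarrow> is_submodule (W j)"
    and "\<And>j. j \<le> l \<Longrightarrow> M 0 \<subseteq> W j \<and> W j \<subseteq> M L"
    and "\<And>j. j < l \<Longrightarrow> W j \<subset> W (Suc j)"
  shows "l \<le> L"
proof -
  have W_mono: "W j \<subseteq> W (Suc j)" if "j < l" for j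
    using assms(6)[OF that] by blast
  have "card {j. j < l \<and> W j \<noteq> W (Suc j)} \<le> L"
    by (rule card_steps_le_composition_length[of L M l W, OF assms(1-5) W_mono])
  moreover have "{j. j < l \<and> W j \<noteq> W (Suc j)} = {..<l}" using assms(6) by auto
  ultimately show ?thesis by simp
qed

definition unit_vec :: "'i \<Rightarrow> 'i \<Rightarrow> 'a::comm_ring_1" where
  "unit_vec r = (\<lambda>x. if x = r then 1 else 0)"

lemma unit_vec_free_mod: "r \<in> I \<Longrightarrow> unit_vec r \<in> free_mod I"
  unfolding unit_vec_def free_mod_def by auto

lemma mat_vec_unit_vec: "finite C \<Longrightarrow> k \<in> C \<Longrightarrow> mat_vec C A (unit_vec k) = (\<lambda>r. A r k)"
  unfolding mat_vec_def unit_vec_def by (simp add: if_distrib cong: if_cong)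

lemma free_mod_subset_if_unit_vecs:
  fixes W :: "('i \<Rightarrow> 'a::comm_ring_1) set"
  assumes W: "is_submodule W" and "finite I" and "\<And>r. r \<in> I \<Longrightarrow> unit_vec r \<in> W"
  shows "free_mod I \<subseteq> W"
proof
  fix v :: "'i \<Rightarrow> 'a" assume v: "v \<in> free_mod I"
  have "(\<lambda>x. \<Sum>r\<in>I. v r * unit_vec r x) \<in> W"
    using assms by (intro is_submodule_sum is_submodule_scale) auto
  moreover have "(\<lambda>x. \<Sum>r\<in>I. v r * unit_vec r x) = v"
    using v \<open>finite I\<close> unfolding unit_vec_def free_mod_def by (auto simp: if_distrib cong: if_cong)
  ultimately show "v \<in> W" by simp
qed

lemma free_mod_multiple_iff:
  fixes f :: "'i \<Rightarrow> 'a::comm_ring_1"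
  assumes "f \<in> free_mod C"
  shows "(\<exists>x\<in>free_mod C. f = (\<lambda>k. d * x k)) \<longleftrightarrow> (\<forall>k. d dvd f k)"
proof
  assume "\<forall>k. d dvd f k"
  then have "\<exists>x. \<forall>k. f k = d * x k" unfolding dvd_def by (rule choice)
  then obtain x where x: "\<And>k. f k = d * x k" by blast
  have x_free: "(\<lambda>k. if k \<in> C then x k else 0) \<in> free_mod C" unfolding free_mod_def by simp
  have f_eq: "f = (\<lambda>k. d * (if k \<in> C then x k else 0))"
  proof
    fix k show "f k = d * (if k \<in> C then x k else 0)"
      using assms x[of k] unfolding free_mod_def by (cases "k \<in> C") auto
  qed
  show "\<exists>x\<in>free_mod C. f = (\<lambda>k. d * x k)"
    by (rule bexI[OF _ x_free]) (simp add: f_eq)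
qed auto

section \<open>Quotients and isomorphisms\<close>

lemma clsI: "w \<in> U \<Longrightarrow> x = (\<lambda>i. v i + w i) \<Longrightarrow> x \<in> cls U v"
  unfolding cls_def by blast

lemma cls_mem: "is_submodule U \<Longrightarrow> v \<in> cls U v"
  unfolding cls_def using is_submodule_zero[of U] by force

lemma cls_eq_iff:
  assumes U: "is_submodule U"
  shows "cls U v = cls U v' \<longleftrightarrow> (\<lambda>i. v i - v' i) \<in> U"
proof
  assume "cls U v = cls U v'"
  then obtain w where "w \<in> U" "v = (\<lambda>i. v' i + w i)"
    using cls_mem[OF U, of v] unfolding cls_def by blast
  then show "(\<lambda>i. v i - v' i) \<in> U" by simp
next
  have sub: "cls U v \<subseteq> cls U v'" if d: "(\<lambda>i. v i - v' i) \<in> U" for v v'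
  proof
    fix x assume "x \<in> cls U v"
    then obtain w where w: "w \<in> U" "x = (\<lambda>i. v i + w i)" unfolding cls_def by blast
    show "x \<in> cls U v'"
      by (rule clsI[OF is_submodule_add[OF U d w(1)]]) (simp add: w(2))
  qed
  assume d: "(\<lambda>i. v i - v' i) \<in> U"
  have "(\<lambda>i. v' i - v i) \<in> U" using is_submodule_scale[OF U d, of "-1"] by simp
  then show "cls U v = cls U v'" using sub[OF d] sub[of v' v] by blast
qed

lemma qrep_cls_diff: "is_submodule U \<Longrightarrow> (\<lambda>i. qrep (cls U v) i - v i) \<in> U"
  using someI[of "\<lambda>x. x \<in> cls U v", OF cls_mem] unfolding qrep_def cls_def by fastforce

lemma qadd_cls: "is_submodule U \<Longrightarrow> qadd U (cls U v) (cls U v') = cls U (\<lambda>i. v i + v' i)"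
  unfolding qadd_def cls_eq_iff
  using is_submodule_add[OF _ qrep_cls_diff[of U v] qrep_cls_diff[of U v']]
  by (simp add: algebra_simps)

lemma qscale_cls: "is_submodule U \<Longrightarrow> qscale U s (cls U v) = cls U (\<lambda>i. s * v i)"
  unfolding qscale_def cls_eq_iff
  using is_submodule_scale[OF _ qrep_cls_diff[of U v], of s]
  by (simp add: algebra_simps)

lemma mod_iso_from_inverse:
  assumes bij: "bij_betw \<psi> A B"
    and closed: "\<And>x y. x \<in> A \<Longrightarrow> y \<in> A \<Longrightarrow> addA x y \<in> A" "\<And>s x. x \<in> A \<Longrightarrow> scA s x \<in> A"
    and hom: "\<And>x y. x \<in> A \<Longrightarrow> y \<in> A \<Longrightarrow> \<psi> (addA x y) = addB (\<psi> x) (\<psi> y)"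
      "\<And>s x. x \<in> A \<Longrightarrow> \<psi> (scA s x) = scB s (\<psi> x)"
  shows "mod_iso B addB scB A addA scA"
  unfolding mod_iso_def
proof (intro exI[of _ "inv_into A \<psi>"] conjI ballI allI)
  let ?\<phi> = "inv_into A \<psi>"
  have inv: "?\<phi> x \<in> A" "\<psi> (?\<phi> x) = x" if "x \<in> B" for x
    using bij that by (auto simp: bij_betw_def f_inv_into_f inv_into_into)
  have left_inv: "?\<phi> (\<psi> x) = x" if "x \<in> A" for x
    using bij that by (simp add: bij_betw_def)
  show "bij_betw ?\<phi> B A" using bij by (rule bij_betw_inv_into)
  fix x y assume x: "x \<in> B" and y: "y \<in> B"
  have "addB x y = \<psi> (addA (?\<phi> x) (?\<phi> y))"
    using hom(1)[OF inv(1)[OF x] inv(1)[OF y]] inv(2)[OF x] inv(2)[OF y] by simp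
  then show "?\<phi> (addB x y) = addA (?\<phi> x) (?\<phi> y)"
    using left_inv[OF closed(1)[OF inv(1)[OF x] inv(1)[OF y]]] by simp
next
  let ?\<phi> = "inv_into A \<psi>"
  fix s x assume x: "x \<in> B"
  have "?\<phi> x \<in> A" "\<psi> (?\<phi> x) = x"
    using bij x by (auto simp: bij_betw_def f_inv_into_f inv_into_into)
  moreover from this have "?\<phi> (\<psi> (scA s (?\<phi> x))) = scA s (?\<phi> x)"
    using bij closed(2) by (simp add: bij_betw_def)
  ultimately show "?\<phi> (scB s x) = scA s (?\<phi> x)"
    using hom(2) by metis
qed

definition transport :: "('i \<Rightarrow> 'j) \<Rightarrow> 'i set \<Rightarrow> ('i \<Rightarrow> 'a::zero) \<Rightarrow> 'j \<Rightarrow> 'a" where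
  "transport \<rho> I z = (\<lambda>r. if r \<in> \<rho> ` I then z (inv_into I \<rho> r) else 0)"

lemma transport_add:
  fixes z z' :: "'i \<Rightarrow> 'a::comm_ring_1"
  shows "transport \<rho> I (\<lambda>i. z i + z' i) = (\<lambda>r. transport \<rho> I z r + transport \<rho> I z' r)"
  unfolding transport_def by (rule ext) simp

lemma transport_scale:
  fixes z :: "'i \<Rightarrow> 'a::comm_ring_1"
  shows "transport \<rho> I (\<lambda>i. s * z i) = (\<lambda>r. s * transport \<rho> I z r)"
  unfolding transport_def by (rule ext) simp

lemma bij_betw_transport:
  assumes "bij_betw \<rho> I P"
  shows "bij_betw (transport \<rho> I) (free_mod I) (free_mod P)"
proof (rule bij_betw_byWitness[where f' = "\<lambda>z' i. if i \<in> I then z' (\<rho> i) else 0"])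
  have inj: "inj_on \<rho> I" and P: "\<rho> ` I = P" using assms by (auto simp: bij_betw_def)
  show "\<forall>z\<in>free_mod I. (\<lambda>i. if i \<in> I then transport \<rho> I z (\<rho> i) else 0) = z"
    using inj unfolding transport_def free_mod_def by auto
  show "\<forall>z'\<in>free_mod P. transport \<rho> I (\<lambda>i. if i \<in> I then z' (\<rho> i) else 0) = z'"
    using P unfolding transport_def free_mod_def by (auto simp: f_inv_into_f inv_into_into)
  show "transport \<rho> I ` free_mod I \<subseteq> free_mod P"
    using P unfolding transport_def free_mod_def by auto
  show "(\<lambda>z' i. if i \<in> I then z' (\<rho> i) else 0) ` free_mod P \<subseteq> free_mod I"
    unfolding free_mod_def by auto
qed

text \<open>\<open>T\<close> is the quotient of \<open>M L\<close> by \<open>M 0\<close> via \<open>q\<close>.  The images of the \<open>M i\<close> form a chain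
  of length \<open>L\<close> in \<open>T\<close>, and the preimage of any chain in \<open>T\<close> lies between \<open>M 0\<close> and \<open>M L\<close>.\<close>
locale quotient_of_composition_series =
  fixes M :: "nat \<Rightarrow> ('i \<Rightarrow> 'a::comm_ring_1) set" and L :: nat
    and q :: "('i \<Rightarrow> 'a) \<Rightarrow> 'm" and T :: "'m set"
    and add :: "'m \<Rightarrow> 'm \<Rightarrow> 'm" and sc :: "'a \<Rightarrow> 'm \<Rightarrow> 'm" and z :: 'm
  assumes M_submodule: "\<And>i. i \<le> L \<Longrightarrow> is_submodule (M i)"
    and M_strict: "\<And>i. i < L \<Longrightarrow> M i \<subset> M (Suc i)"
    and M_cover: "\<And>i V. i < L \<Longrightarrow> is_submodule V \<Longrightarrow> M i \<subseteq> V \<Longrightarrow> V \<subseteq> M (Suc i) \<Longrightarrow>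
                   V = M i \<or> V = M (Suc i)"
    and q_image: "q ` M L = T"
    and q_add: "\<And>x y. x \<in> M L \<Longrightarrow> y \<in> M L \<Longrightarrow> q (\<lambda>i. x i + y i) = add (q x) (q y)"
    and q_scale: "\<And>s x. x \<in> M L \<Longrightarrow> q (\<lambda>i. s * x i) = sc s (q x)"
    and q_zero: "q (\<lambda>i. 0) = z"
    and q_eq_iff: "\<And>x y. x \<in> M L \<Longrightarrow> y \<in> M L \<Longrightarrow> q x = q y \<longleftrightarrow> (\<lambda>i. x i - y i) \<in> M 0"
begin

lemma M_mono: "i \<le> j \<Longrightarrow> j \<le> L \<Longrightarrow> M i \<subseteq> M j"
  using chain_mono_le[where W = M and l = L] M_strict by blast

lemma mem_M_if_q_mem_image:
  assumes "i \<le> L" "x \<in> M L" "q x \<in> q ` M i"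
  shows "x \<in> M i"
proof -
  obtain y where y: "y \<in> M i" "q x = q y" using assms(3) by blast
  have "y \<in> M L" using y(1) M_mono[OF assms(1)] by blast
  then have "(\<lambda>k. x k - y k) \<in> M i"
    using q_eq_iff[OF assms(2)] y(2) M_mono[of 0 i] assms(1) by blast
  from is_submodule_add[OF M_submodule[OF assms(1)] y(1) this] show ?thesis by simp
qed

lemma submod_image:
  assumes "i \<le> L"
  shows "submod T add sc z (q ` M i)"
  unfolding submod_def
proof (intro conjI ballI allI)
  have sub: "M i \<subseteq> M L" using M_mono[OF assms] by simp
  then show "q ` M i \<subseteq> T" using q_image by blast
  show "z \<in> q ` M i" using q_zero is_submodule_zero[OF M_submodule[OF assms]] by blast
  fix X Y assume "X \<in> q ` M i" "Y \<in> q ` M i"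
  then obtain x y where xy: "x \<in> M i" "y \<in> M i" "X = q x" "Y = q y" by blast
  moreover have "x \<in> M L" "y \<in> M L" using sub xy(1,2) by blast+
  ultimately have "add X Y = q (\<lambda>k. x k + y k)" using q_add by simp
  then show "add X Y \<in> q ` M i"
    using is_submodule_add[OF M_submodule[OF assms] xy(1,2)] by simp
next
  have sub: "M i \<subseteq> M L" using M_mono[OF assms] by simp
  fix s X assume "X \<in> q ` M i"
  then obtain x where x: "x \<in> M i" "X = q x" by blast
  moreover have "x \<in> M L" using sub x(1) by blast
  ultimately have "sc s X = q (\<lambda>k. s * x k)" using q_scale by simp
  then show "sc s X \<in> q ` M i"
    using is_submodule_scale[OF M_submodule[OF assms] x(1)] by simp
qed

lemma submod_chain_image: "submod_chain T add sc z (\<lambda>i. q ` M i) L"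
  unfolding submod_chain_def
proof (intro conjI allI impI)
  fix i assume "i \<le> L"
  then show "submod T add sc z (q ` M i)" by (rule submod_image)
next
  fix i assume i: "i < L"
  then obtain x where x: "x \<in> M (Suc i)" "x \<notin> M i" using M_strict by blast
  have "x \<in> M L" using x(1) M_mono[of "Suc i" L] i by auto
  then have "q x \<notin> q ` M i" using mem_M_if_q_mem_image[OF less_imp_le[OF i]] x(2) by blast
  then show "q ` M i \<subset> q ` M (Suc i)" using x(1) M_strict[OF i] by blast
qed

lemma is_submodule_preimage:
  assumes S: "submod T add sc z S"
  shows "is_submodule {x \<in> M L. q x \<in> S}"
  unfolding is_submodule_def
proof (intro conjI ballI allI)
  have top: "is_submodule (M L)" by (rule M_submodule) simp
  show "(\<lambda>i. 0) \<in> {x \<in> M L. q x \<in> S}"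
    using S is_submodule_zero[OF top] q_zero unfolding submod_def by simp
  fix x y assume "x \<in> {x \<in> M L. q x \<in> S}" "y \<in> {x \<in> M L. q x \<in> S}"
  then show "(\<lambda>i. x i + y i) \<in> {x \<in> M L. q x \<in> S}"
    using S is_submodule_add[OF top] q_add unfolding submod_def by simp
next
  have top: "is_submodule (M L)" by (rule M_submodule) simp
  fix s x assume "x \<in> {x \<in> M L. q x \<in> S}"
  then show "(\<lambda>i. s * x i) \<in> {x \<in> M L. q x \<in> S}"
    using S is_submodule_scale[OF top] q_scale unfolding submod_def by simp
qed

lemma submod_chain_length_le:
  assumes "submod_chain T add sc z S k"
  shows "k \<le> L"
proof (rule strict_chain_length_le_composition_length[of L M k "\<lambda>j. {x \<in> M L. q x \<in> S j}"])
  have S: "submod T add sc z (S j)" if "j \<le> k" for j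
    using assms that unfolding submod_chain_def by blast
  show "is_submodule {x \<in> M L. q x \<in> S j}" if "j \<le> k" for j
    by (rule is_submodule_preimage[OF S[OF that]])
  have top: "is_submodule (M L)" by (rule M_submodule) simp
  show "M 0 \<subseteq> {x \<in> M L. q x \<in> S j} \<and> {x \<in> M L. q x \<in> S j} \<subseteq> M L" if "j \<le> k" for j
  proof -
    have "q x = z" if "x \<in> M 0" for x
      using q_eq_iff[of x "\<lambda>i. 0"] q_zero that M_mono[of 0 L] is_submodule_zero[OF top] by auto
    then show ?thesis using S[OF that] M_mono[of 0 L] unfolding submod_def by auto
  qed
  show "{x \<in> M L. q x \<in> S j} \<subset> {x \<in> M L. q x \<in> S (Suc j)}" if "j < k" for j
  proof -
    have "S j \<subset> S (Suc j)" "S (Suc j) \<subseteq> T"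
      using assms that unfolding submod_chain_def submod_def by auto
    then obtain X where "X \<in> S (Suc j)" "X \<notin> S j" "X \<in> T" by blast
    then obtain x where "x \<in> M L" "q x \<in> S (Suc j)" "q x \<notin> S j" using q_image by blast
    then show ?thesis using \<open>S j \<subset> S (Suc j)\<close> by blast
  qed
qed (use M_submodule M_strict M_cover in auto)

lemma has_length: "has_length T add sc z L"
  unfolding has_length_def using submod_chain_image submod_chain_length_le by blast

end

section \<open>Valuation submodules over a discrete valuation ring\<close>

lemma dvr_nonzero: "dvr pi \<Longrightarrow> pi \<noteq> 0"
  unfolding dvr_def by blast

lemma dvr_not_unit: "dvr pi \<Longrightarrow> \<not> pi dvd 1"
  unfolding dvr_def by blast

lemma dvr_unit_if_not_dvd:
  assumes "dvr pi" "c \<noteq> 0" "\<not> pi dvd c"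
  shows "c dvd 1"
proof -
  obtain u j where "u dvd 1" "c = u * pi ^ j"
    using assms(1,2) unfolding dvr_def by blast
  moreover have "j = 0"
    using assms(3) \<open>c = u * pi ^ j\<close> by (cases j) auto
  ultimately show ?thesis by simp
qed

lemma dvr_power_dvd_power_iff:
  assumes "dvr pi"
  shows "pi ^ a dvd pi ^ b \<longleftrightarrow> a \<le> b"
proof
  assume dvd: "pi ^ a dvd pi ^ b"
  show "a \<le> b"
  proof (rule ccontr)
    assume "\<not> a \<le> b"
    then have "pi ^ b * pi ^ (a - b) dvd pi ^ b * 1"
      using dvd by (simp flip: power_add)
    then have "pi ^ (a - b) dvd 1"
      using dvr_nonzero[OF assms] by (subst (asm) dvd_mult_cancel_left) simp
    moreover have "pi dvd pi ^ (a - b)" using \<open>\<not> a \<le> b\<close> by (simp add: dvd_power)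
    ultimately show False using dvr_not_unit[OF assms] dvd_trans by blast
  qed
qed (rule le_imp_power_dvd)

lemma val_power:
  assumes "dvr pi"
  shows "val pi (pi ^ w) = w"
  unfolding val_def
proof (rule the_equality)
  show "\<exists>u. u dvd 1 \<and> pi ^ w = u * pi ^ w" by (intro exI[of _ 1]) simp
  fix k assume "\<exists>u. u dvd 1 \<and> pi ^ w = u * pi ^ k"
  then obtain u where u: "u dvd 1" "pi ^ w = u * pi ^ k" by blast
  then have "pi ^ w dvd pi ^ k" "pi ^ k dvd pi ^ w"
    by (simp_all add: mult_unit_dvd_iff')
  then show "k = w"
    using dvr_power_dvd_power_iff[OF assms] by (meson le_antisym)
qed

definition val_ge_submodule :: "'a::comm_ring_1 \<Rightarrow> 'i set \<Rightarrow> ('i \<Rightarrow> nat) \<Rightarrow> ('i \<Rightarrow> 'a) set" where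
  "val_ge_submodule pi C h = {y \<in> free_mod C. \<forall>k\<in>C. pi ^ h k dvd y k}"

lemma is_submodule_val_ge_submodule: "is_submodule (val_ge_submodule pi C h)"
  unfolding is_submodule_def val_ge_submodule_def free_mod_def by (auto simp: dvd_add)

lemma val_ge_submodule_antimono:
  "(\<And>k. k \<in> C \<Longrightarrow> h' k \<le> h k) \<Longrightarrow> val_ge_submodule pi C h \<subseteq> val_ge_submodule pi C h'"
  unfolding val_ge_submodule_def using power_le_dvd by blast

locale exponent_step =
  fixes pi :: "'a::idom" and C :: "'i set" and h h' :: "'i \<Rightarrow> nat" and p :: 'i
  assumes dvr: "dvr pi" and p_mem: "p \<in> C" and at_p: "h p = Suc (h' p)"
    and off_p: "\<And>k. k \<in> C \<Longrightarrow> k \<noteq> p \<Longrightarrow> h' k = h k"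
begin

lemma unit_at_p:
  assumes "s \<in> val_ge_submodule pi C h'" "s \<notin> val_ge_submodule pi C h"
  obtains c where "c dvd 1" "s p = pi ^ h' p * c"
proof -
  have "\<not> pi ^ h p dvd s p"
  proof
    assume hp: "pi ^ h p dvd s p"
    have "pi ^ h k dvd s k" if "k \<in> C" for k
      using hp off_p[OF that] assms(1) that unfolding val_ge_submodule_def
      by (cases "k = p") auto
    then show False using assms unfolding val_ge_submodule_def by auto
  qed
  moreover obtain c where c: "s p = pi ^ h' p * c"
    using p_mem assms(1) unfolding val_ge_submodule_def by (auto elim: dvdE)
  ultimately have "c \<noteq> 0" "\<not> pi dvd c"
    using at_p by (auto simp: mult_dvd_mono)
  then show ?thesis using that dvr_unit_if_not_dvd[OF dvr] c by blast
qed

lemma val_ge_submodule_psubset: "val_ge_submodule pi C h \<subset> val_ge_submodule pi C h'"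
proof -
  have "h' k \<le> h k" if "k \<in> C" for k
    using at_p off_p[OF that] by (cases "k = p") auto
  then have "val_ge_submodule pi C h \<subseteq> val_ge_submodule pi C h'"
    by (rule val_ge_submodule_antimono)
  moreover
  define y where "y = (\<lambda>k. if k = p then pi ^ h' p else 0)"
  have "y \<in> val_ge_submodule pi C h'"
    using p_mem unfolding val_ge_submodule_def y_def free_mod_def by auto
  moreover have "y \<notin> val_ge_submodule pi C h"
  proof
    assume "y \<in> val_ge_submodule pi C h"
    then have "pi ^ h p dvd pi ^ h' p"
      using p_mem unfolding val_ge_submodule_def y_def by auto
    then have "h p \<le> h' p" using dvr_power_dvd_power_iff[OF dvr] by blast
    with at_p show False by simp
  qed
  ultimately show ?thesis by blast
qed

lemma val_ge_submodule_cover: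
  assumes V: "is_submodule V" "val_ge_submodule pi C h \<subseteq> V" "V \<subseteq> val_ge_submodule pi C h'"
  shows "V = val_ge_submodule pi C h \<or> V = val_ge_submodule pi C h'"
proof (cases "V = val_ge_submodule pi C h")
  case False
  then obtain s where s: "s \<in> V" "s \<notin> val_ge_submodule pi C h" using V(2) by blast
  then obtain c where c: "c dvd 1" "s p = pi ^ h' p * c"
    using unit_at_p V(3) by blast
  then obtain ci where ci: "c * ci = 1" by (metis dvdE)
  have "b \<in> V" if b: "b \<in> val_ge_submodule pi C h'" for b
  proof -
    obtain d where d: "b p = pi ^ h' p * d"
      using b p_mem unfolding val_ge_submodule_def by (auto elim: dvdE)
    txt \<open>Subtracting a multiple of \<open>s\<close> clears the coordinate \<open>p\<close> of \<open>b\<close>.\<close>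
    define b' where "b' = (\<lambda>k. b k - (d * ci) * s k)"
    have b'p: "b' p = 0" unfolding b'_def using c(2) d ci by (simp add: algebra_simps)
    have b'h': "b' \<in> val_ge_submodule pi C h'"
      using is_submodule_diff[OF is_submodule_val_ge_submodule b
          is_submodule_scale[OF is_submodule_val_ge_submodule, of s]] s(1) V(3)
      unfolding b'_def by blast
    have "pi ^ h k dvd b' k" if "k \<in> C" for k
      using b'p b'h' off_p[OF that] that unfolding val_ge_submodule_def by (cases "k = p") auto
    then have "b' \<in> val_ge_submodule pi C h"
      using b'h' unfolding val_ge_submodule_def by blast
    then have "(\<lambda>k. b' k + (d * ci) * s k) \<in> V"
      using V(2) is_submodule_add[OF V(1) _ is_submodule_scale[OF V(1) s(1)]] by blast
    then show "b \<in> V" unfolding b'_def by simp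
  qed
  then show ?thesis using V(3) by blast
qed simp

end

text \<open>The exponent profiles of a composition series from \<open>\<pi>\<^sup>w O\<^sup>N\<close> to \<open>O\<^sup>N\<close>: each step lowers the
  first positive exponent by one.\<close>
definition staircase :: "nat \<Rightarrow> nat \<Rightarrow> nat \<Rightarrow> nat" where
  "staircase w i k =
     (if k - 1 < i div w then 0 else if k - 1 = i div w then w - i mod w else w)"

lemma staircase_0: "1 \<le> k \<Longrightarrow> staircase w 0 k = w"
  unfolding staircase_def by auto

lemma staircase_top: "k \<in> {1..N} \<Longrightarrow> staircase w (N * w) k = 0"
  unfolding staircase_def by (cases "w = 0") auto

lemma staircase_step:
  assumes "i < N * w"
  shows "i div w + 1 \<in> {1..N}"
    and "staircase w i (i div w + 1) = Suc (staircase w (Suc i) (i div w + 1))"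
    and "\<And>k. 1 \<le> k \<Longrightarrow> k \<noteq> i div w + 1 \<Longrightarrow> staircase w (Suc i) k = staircase w i k"
proof -
  have w: "0 < w" using assms by (cases "w = 0") auto
  show "i div w + 1 \<in> {1..N}"
    using less_mult_imp_div_less[OF assms] by simp
  have "i mod w < w" using w by simp
  then consider "Suc (i mod w) < w" "Suc i div w = i div w" "Suc i mod w = Suc (i mod w)"
    | "Suc (i mod w) = w" "Suc i div w = Suc (i div w)" "Suc i mod w = 0"
    using div_Suc[of i w] mod_Suc[of i w] by (cases "Suc (i mod w) = w") auto
  note cases = this
  show "staircase w i (i div w + 1) = Suc (staircase w (Suc i) (i div w + 1))"
    by (cases rule: cases) (auto simp: staircase_def)
  show "staircase w (Suc i) k = staircase w i k" if "1 \<le> k" "k \<noteq> i div w + 1" for k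
    using that by (cases rule: cases) (auto simp: staircase_def)
qed

lemma exponent_step_staircase:
  assumes "dvr pi" "i < N * w"
  shows "exponent_step pi {1..N} (staircase w i) (staircase w (Suc i)) (i div w + 1)"
  using assms(1) staircase_step[OF assms(2)] by unfold_locales auto

lemma val_ge_staircase_psubset:
  assumes "dvr pi" "i < N * w"
  shows "val_ge_submodule pi {1..N} (staircase w i) \<subset> val_ge_submodule pi {1..N} (staircase w (Suc i))"
  by (rule exponent_step.val_ge_submodule_psubset[OF exponent_step_staircase[OF assms]])

lemma val_ge_staircase_cover:
  assumes "dvr pi" "i < N * w" and "is_submodule V"
    and "val_ge_submodule pi {1..N} (staircase w i) \<subseteq> V"
    and "V \<subseteq> val_ge_submodule pi {1..N} (staircase w (Suc i))"
  shows "V = val_ge_submodule pi {1..N} (staircase w i) \<or>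
         V = val_ge_submodule pi {1..N} (staircase w (Suc i))"
  by (rule exponent_step.val_ge_submodule_cover[OF exponent_step_staircase[OF assms(1,2)] assms(3-5)])

lemma val_ge_staircase_0:
  "val_ge_submodule pi {1..N} (staircase w 0) = val_ge_submodule pi {1..N} (\<lambda>_. w)"
  unfolding val_ge_submodule_def by (simp add: staircase_0)

lemma val_ge_staircase_top: "val_ge_submodule pi {1..N} (staircase w (N * w)) = free_mod {1..N}"
  unfolding val_ge_submodule_def by (simp add: staircase_top)

section \<open>The Jacobian at the point \<open>a\<close>\<close>

lemma eq_if_mod_eq_window:
  fixes u v d b :: nat
  assumes "u mod d = v mod d" "u \<in> {b..<b + d}" "v \<in> {b..<b + d}"
  shows "u = v"
proof -
  have "x = y" if eq: "x mod d = y mod d" "y \<le> x" and bounds: "x < b + d" "b \<le> y" for x y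
  proof -
    obtain s where s: "x = y + d * s" using mod_eq_nat1E[OF eq] by blast
    with bounds have "d * s < d" by linarith
    then have "s = 0" by (cases s) auto
    with s show ?thesis by simp
  qed
  from this[of u v] this[of v u] assms show ?thesis
    by (cases "v \<le> u") auto
qed

locale jacobian_at_point =
  fixes pi :: "'a::idom" and m n :: nat and e :: "nat \<Rightarrow> nat"
  assumes dvr: "dvr pi" and two_le_m: "2 \<le> m" and m_le_n: "m \<le> n"
begin

abbreviation "t \<equiv> m - 1"
abbreviation "R \<equiv> {1..m} \<times> {1..n}"
abbreviation "C \<equiv> {1..n - t}"
abbreviation "J \<equiv> jac_eval m n (pt pi m e)"
abbreviation "U \<equiv> mat_image C J"
abbreviation "T \<equiv> torsion_part R C J"
abbreviation "weight \<equiv> \<Sum>i = 1..t. e i"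

definition Delta :: 'a where
  "Delta = (\<Prod>i = 1..t. pi ^ e i)"

lemma Delta_eq_power: "Delta = pi ^ weight"
  unfolding Delta_def by (simp add: power_sum)

lemma t_pos: "0 < t"
  using two_le_m by simp

definition diag_row :: "nat \<Rightarrow> nat" where
  "diag_row j = (j - 1) mod t + 1"

lemma diag_row_range: "diag_row j \<in> {1..t}"
  unfolding diag_row_def using t_pos by (simp add: Suc_le_eq)

lemma pt_eq: "pt pi m e i j = (if i \<in> {1..t} \<and> i = diag_row j then pi ^ e i else 0)"
  unfolding pt_def diag_row_def using two_le_m by auto

lemma prod_pt_eq:
  "(\<Prod>i\<in>{1..t}. pt pi m e i (c i)) = (if \<forall>i\<in>{1..t}. diag_row (c i) = i then Delta else 0)"
proof (cases "\<forall>i\<in>{1..t}. diag_row (c i) = i")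
  case True
  then have "(\<Prod>i\<in>{1..t}. pt pi m e i (c i)) = Delta"
    unfolding Delta_def pt_eq by (intro prod.cong) auto
  then show ?thesis unfolding if_P[OF True] .
next
  case False
  then obtain i where "i \<in> {1..t}" "pt pi m e i (c i) = 0" unfolding pt_eq by auto
  then show ?thesis unfolding if_not_P[OF False] by (meson finite_atLeastAtMost prod_zero)
qed

text \<open>The permutations whose term in the Leibniz expansion of \<open>\<partial>f\<^sub>k/\<partial>X\<^sub>m\<^sub>j\<close> survives at \<open>a\<close>.\<close>
definition contrib_perms :: "nat \<Rightarrow> nat \<Rightarrow> (nat \<Rightarrow> nat) set" where
  "contrib_perms k j = {\<sigma>. \<sigma> permutes {1..m} \<and> k + \<sigma> m - 1 = j \<and>
                            (\<forall>i\<in>{1..t}. diag_row (k + \<sigma> i - 1) = i)}"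

definition jac_coeff :: "nat \<Rightarrow> nat \<Rightarrow> 'a" where
  "jac_coeff k j = (\<Sum>\<sigma>\<in>contrib_perms k j. of_int (sign \<sigma>))"

lemma jac_eval_not_last_row:
  assumes "i \<noteq> m"
  shows "J (i, j) k = 0"
proof -
  have "(\<Prod>i' \<in> {1..m} - {i}. pt pi m e i' (k + \<sigma> i' - 1)) = 0" for \<sigma>
  proof (rule prod_zero)
    show "\<exists>i'\<in>{1..m} - {i}. pt pi m e i' (k + \<sigma> i' - 1) = 0"
      using assms two_le_m by (intro bexI[of _ m]) (auto simp: pt_def)
  qed simp
  then show ?thesis unfolding jac_eval_def by (simp del: prod_zero_iff)
qed

lemma jac_eval_last_row:
  assumes "j \<in> {1..n}" "k \<in> C"
  shows "J (m, j) k = Delta * jac_coeff k j"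
proof -
  let ?S = "{\<sigma>. \<sigma> permutes {1..m} \<and> k + \<sigma> m - 1 = j}"
  let ?P = "\<lambda>\<sigma>. \<forall>i\<in>{1..t}. diag_row (k + \<sigma> i - 1) = i"
  have "finite ?S"
    by (rule finite_subset[OF _ finite_permutations[of "{1..m}"]]) auto
  have "{1..m} - {m} = {1..t}" using two_le_m by auto
  then have "J (m, j) k = (\<Sum>\<sigma>\<in>?S. of_int (sign \<sigma>) * (\<Prod>i\<in>{1..t}. pt pi m e i (k + \<sigma> i - 1)))"
    unfolding jac_eval_def using assms two_le_m by simp
  also have "\<dots> = (\<Sum>\<sigma>\<in>?S. if ?P \<sigma> then of_int (sign \<sigma>) * Delta else 0)"
    by (intro sum.cong refl) (subst prod_pt_eq, simp)
  also have "\<dots> = (\<Sum>\<sigma>\<in>{\<sigma>\<in>?S. ?P \<sigma>}. of_int (sign \<sigma>) * Delta)"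
    by (rule sum.inter_filter[OF \<open>finite ?S\<close>, symmetric])
  also have "{\<sigma>\<in>?S. ?P \<sigma>} = contrib_perms k j"
    unfolding contrib_perms_def by auto
  finally show ?thesis
    unfolding jac_coeff_def sum_distrib_left by (simp add: mult.commute)
qed

lemma permutes_image_but_last:
  assumes "\<sigma> permutes {1..m}"
  shows "\<sigma> ` {1..t} = {1..m} - {\<sigma> m}"
proof -
  have "{1..t} = {1..m} - {m}" using two_le_m by auto
  then show ?thesis
    using image_set_diff[OF permutes_inj[OF assms], of "{1..m}" "{m}"] permutes_image[OF assms]
    by simp
qed

lemma contrib_permsD:
  assumes "\<sigma> \<in> contrib_perms k j"
  shows "\<sigma> permutes {1..m}" "k + \<sigma> m - 1 = j" "\<And>i. i \<in> {1..t} \<Longrightarrow> diag_row (k + \<sigma> i - 1) = i"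
  using assms unfolding contrib_perms_def by auto

text \<open>Columns \<open>k\<close> and \<open>k + t\<close> of \<open>a\<close> carry their entry in the same row, so a surviving term
  must pick one of them in the last row.\<close>
lemma contrib_perms_last:
  assumes "\<sigma> \<in> contrib_perms k j" "1 \<le> k"
  shows "\<sigma> m = 1 \<or> \<sigma> m = m"
proof (rule ccontr)
  assume "\<not> (\<sigma> m = 1 \<or> \<sigma> m = m)"
  then have "1 \<in> \<sigma> ` {1..t}" "m \<in> \<sigma> ` {1..t}"
    using permutes_image_but_last[OF contrib_permsD(1)[OF assms(1)]] two_le_m by auto
  then obtain a b where ab: "a \<in> {1..t}" "\<sigma> a = 1" "b \<in> {1..t}" "\<sigma> b = m"
    by (metis imageE)
  have "k + t - 1 = (k - 1) + t" using assms(2) by simp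
  then have "diag_row k = diag_row (k + t)"
    unfolding diag_row_def by (simp only: mod_add_self2)
  then have "a = b"
    using contrib_permsD(3)[OF assms(1) ab(1)] contrib_permsD(3)[OF assms(1) ab(3)] ab(2,4) two_le_m
    by simp
  then show False using ab(2,4) two_le_m by simp
qed

lemma contrib_perms_unique:
  assumes \<sigma>: "\<sigma> \<in> contrib_perms k j" and \<tau>: "\<tau> \<in> contrib_perms k j"
  shows "\<sigma> = \<tau>"
proof
  fix x
  have "\<sigma> m \<in> {1..m}" "\<tau> m \<in> {1..m}"
    using permutes_in_image[OF contrib_permsD(1)[OF \<sigma>]] permutes_in_image[OF contrib_permsD(1)[OF \<tau>]]
      two_le_m by auto
  then have last: "\<sigma> m = \<tau> m" using contrib_permsD(2)[OF \<sigma>] contrib_permsD(2)[OF \<tau>] by auto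
  show "\<sigma> x = \<tau> x"
  proof (cases "x \<in> {1..t}")
    case True
    then have "\<tau> x \<in> \<tau> ` {1..t}" by simp
    also have "\<tau> ` {1..t} = \<sigma> ` {1..t}"
      using permutes_image_but_last[OF contrib_permsD(1)[OF \<sigma>]]
        permutes_image_but_last[OF contrib_permsD(1)[OF \<tau>]] last by simp
    finally obtain b where b: "b \<in> {1..t}" "\<tau> x = \<sigma> b" by blast
    then have "b = x" using contrib_permsD(3)[OF \<sigma> b(1)] contrib_permsD(3)[OF \<tau> True] by simp
    then show ?thesis using b by simp
  next
    case False
    then have "x = m \<or> x \<notin> {1..m}" by auto
    then show ?thesis
      using last permutes_not_in[OF contrib_permsD(1)[OF \<sigma>]] permutes_not_in[OF contrib_permsD(1)[OF \<tau>]]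
      by auto
  qed
qed

lemma bij_betw_diag_row_window:
  assumes "1 \<le> k"
  shows "bij_betw (\<lambda>c. diag_row (k + c - 1)) {2..m} {1..t}"
proof -
  have inj: "inj_on (\<lambda>c. diag_row (k + c - 1)) {2..m}"
  proof (rule inj_onI)
    fix c c' assume c: "c \<in> {2..m}" and c': "c' \<in> {2..m}"
      and "diag_row (k + c - 1) = diag_row (k + c' - 1)"
    then have "(k + c - 1 - 1) mod t = (k + c' - 1 - 1) mod t"
      unfolding diag_row_def by simp
    moreover have "k + c - 1 - 1 \<in> {k..<k + t}" "k + c' - 1 - 1 \<in> {k..<k + t}"
      using c c' by auto
    ultimately have "k + c - 1 - 1 = k + c' - 1 - 1" by (rule eq_if_mod_eq_window)
    moreover have "2 \<le> c" "2 \<le> c'" using c c' by auto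
    ultimately show "c = c'" by arith
  qed
  have "card ((\<lambda>c. diag_row (k + c - 1)) ` {2..m}) = card {1..t}"
    using card_image[OF inj] by simp
  then have "(\<lambda>c. diag_row (k + c - 1)) ` {2..m} = {1..t}"
    by (rule card_subset_eq[OF finite_atLeastAtMost, rotated]) (use diag_row_range in blast)
  with inj show ?thesis unfolding bij_betw_def by blast
qed

lemma contrib_perms_diag_nonempty:
  assumes "1 \<le> k"
  shows "contrib_perms k k \<noteq> {}"
proof -
  let ?f = "\<lambda>c. diag_row (k + c - 1)"
  let ?g = "the_inv_into {2..m} ?f"
  define \<sigma> where "\<sigma> x = (if x \<in> {1..t} then ?g x else if x = m then 1 else x)" for x
  have "m \<notin> {1..t}" using two_le_m by simp
  then have last: "\<sigma> m = 1" unfolding \<sigma>_def by (subst if_not_P) simp_all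
  have "bij_betw \<sigma> {1..t} {2..m}"
    using bij_betw_the_inv_into[OF bij_betw_diag_row_window[OF assms]]
    by (rule iffD1[OF bij_betw_cong, rotated]) (simp add: \<sigma>_def)
  moreover have "bij_betw \<sigma> {m} {1}" using last by simp
  ultimately have "bij_betw \<sigma> ({1..t} \<union> {m}) ({2..m} \<union> {1})"
    by (rule bij_betw_combine) simp
  moreover have "{1..t} \<union> {m} = {1..m}" "{2..m} \<union> {1} = {1..m}" using two_le_m by auto
  ultimately have "\<sigma> permutes {1..m}"
    by (intro bij_imp_permutes) (auto simp: \<sigma>_def)
  moreover have "diag_row (k + \<sigma> i - 1) = i" if "i \<in> {1..t}" for i
    using f_the_inv_into_f_bij_betw[OF bij_betw_diag_row_window[OF assms]] that by (simp add: \<sigma>_def)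
  ultimately have "\<sigma> \<in> contrib_perms k k" unfolding contrib_perms_def using last by simp
  then show ?thesis by blast
qed

lemma jac_coeff_eq_0:
  assumes "1 \<le> k" "j \<noteq> k" "j \<noteq> k + t"
  shows "jac_coeff k j = 0"
proof -
  have "contrib_perms k j = {}"
    using contrib_perms_last[OF _ assms(1)] contrib_permsD(2) assms(2,3) two_le_m by force
  then show ?thesis unfolding jac_coeff_def by simp
qed

lemma jac_coeff_diag_square:
  assumes "1 \<le> k"
  shows "jac_coeff k k * jac_coeff k k = 1"
proof -
  obtain \<sigma> where "contrib_perms k k = {\<sigma>}"
    using contrib_perms_diag_nonempty[OF assms] contrib_perms_unique by blast
  then show ?thesis
    unfolding jac_coeff_def by (simp flip: of_int_mult)
qed

section \<open>The cokernel\<close>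

definition Jred :: "nat \<times> nat \<Rightarrow> nat \<Rightarrow> 'a" where
  "Jred r k = (if fst r = m \<and> k \<in> C then jac_coeff k (snd r) else 0)"

abbreviation "Rfree \<equiv> R - {m} \<times> C"

lemma jac_coeff_eq_0_outside:
  assumes "k \<in> C" "j \<notin> {1..n}"
  shows "jac_coeff k j = 0"
  using assms by (intro jac_coeff_eq_0) auto

lemma jac_eval_eq_Delta_mult: "J r k = Delta * Jred r k"
proof (cases r)
  case (Pair i j)
  consider "i \<noteq> m" | "i = m" "k \<notin> C" | "i = m" "k \<in> C" "j \<in> {1..n}" | "i = m" "k \<in> C" "j \<notin> {1..n}"
    by blast
  then show ?thesis
  proof cases
    case 1
    then show ?thesis using Pair jac_eval_not_last_row by (simp add: Jred_def)
  next
    case 2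
    then show ?thesis using Pair by (auto simp: Jred_def jac_eval_def)
  next
    case 3
    then show ?thesis using Pair jac_eval_last_row by (simp add: Jred_def)
  next
    case 4
    then have "jac_coeff k j = 0" by (intro jac_coeff_eq_0_outside) simp_all
    with 4 Pair show ?thesis by (auto simp: Jred_def jac_eval_def)
  qed
qed

lemma mat_vec_J: "mat_vec C J x = mat_vec C Jred (\<lambda>k. Delta * x k)"
  unfolding mat_vec_def jac_eval_eq_Delta_mult by (simp add: ac_simps)

lemma U_eq: "U = {mat_vec C Jred (\<lambda>k. Delta * x k) | x. x \<in> free_mod C}"
  unfolding mat_image_def mat_vec_J ..

lemma mat_vec_Jred_free_mod: "mat_vec C Jred y \<in> free_mod R"
proof -
  have "Jred r k = 0" if "r \<notin> R" "k \<in> C" for r k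
    using that jac_coeff_eq_0_outside two_le_m by (cases r) (auto simp: Jred_def)
  then show ?thesis unfolding free_mod_def mat_vec_def by simp
qed

lemma mat_vec_Jred_last_row:
  assumes "j \<in> C" "\<And>k. k < j \<Longrightarrow> y k = 0"
  shows "mat_vec C Jred y (m, j) = jac_coeff j j * y j"
proof -
  have "Jred (m, j) k * y k = 0" if "k \<in> C" "k \<noteq> j" for k
  proof (cases "k < j")
    case False
    then have "jac_coeff k j = 0" using that by (intro jac_coeff_eq_0) auto
    then show ?thesis by (simp add: Jred_def)
  qed (simp add: assms(2))
  then have "mat_vec C Jred y (m, j) = (\<Sum>k\<in>{j}. Jred (m, j) k * y k)"
    unfolding mat_vec_def using assms(1) by (intro sum.mono_neutral_right) auto
  then show ?thesis using assms(1) by (simp add: Jred_def)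
qed

lemma jac_coeff_diag_nonzero: "k \<in> C \<Longrightarrow> jac_coeff k k \<noteq> 0"
  using jac_coeff_diag_square[of k] by auto

lemma Jred_injective:
  assumes "y \<in> free_mod C" "\<And>j. j \<in> C \<Longrightarrow> mat_vec C Jred y (m, j) = 0"
  shows "y = (\<lambda>k. 0)"
proof
  fix j show "y j = 0"
  proof (induction j rule: less_induct)
    case (less j)
    show ?case
    proof (cases "j \<in> C")
      case True
      then have "jac_coeff j j * y j = 0"
        using mat_vec_Jred_last_row[where j = j and y = y, OF True less.IH] assms(2) by simp
      then show ?thesis using jac_coeff_diag_nonzero[OF True] by simp
    next
      case False
      then show ?thesis using assms(1) unfolding free_mod_def by blast
    qed
  qed
qed

lemma Jred_meets_free_part:
  assumes "y \<in> free_mod C" "mat_vec C Jred y \<in> free_mod Rfree"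
  shows "y = (\<lambda>k. 0)"
proof (rule Jred_injective[OF assms(1)])
  fix j assume "j \<in> C"
  then have "(m, j) \<notin> Rfree" by simp
  then show "mat_vec C Jred y (m, j) = 0" using assms(2) unfolding free_mod_def by blast
qed

lemma Jred_column:
  assumes "k \<in> C"
  shows "(\<lambda>r. Jred r k) =
    (\<lambda>r. jac_coeff k k * unit_vec (m, k) r + jac_coeff k (k + t) * unit_vec (m, k + t) r)"
proof
  fix r :: "nat \<times> nat"
  obtain i j where r: "r = (i, j)" by fastforce
  have "jac_coeff k j = 0" if "j \<noteq> k" "j \<noteq> k + t"
    using assms that by (intro jac_coeff_eq_0) auto
  then show "Jred r k = jac_coeff k k * unit_vec (m, k) r + jac_coeff k (k + t) * unit_vec (m, k + t) r"
    using assms t_pos r by (auto simp: Jred_def unit_vec_def)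
qed

lemma Jred_column_mem: "k \<in> C \<Longrightarrow> (\<lambda>r. Jred r k) \<in> mat_image C Jred"
  using mat_vec_mem_mat_image[OF unit_vec_free_mod, of k C Jred]
  by (simp add: mat_vec_unit_vec)

lemma unit_vec_last_row_eq:
  assumes "k \<in> C"
  shows "unit_vec (m, k) = (\<lambda>r. jac_coeff k k * Jred r k +
           - (jac_coeff k k * jac_coeff k (k + t)) * unit_vec (m, k + t) r)"
proof
  fix r
  have "Jred r k = jac_coeff k k * unit_vec (m, k) r + jac_coeff k (k + t) * unit_vec (m, k + t) r"
    using fun_cong[OF Jred_column[OF assms], of r] by simp
  then have "jac_coeff k k * Jred r k + - (jac_coeff k k * jac_coeff k (k + t)) * unit_vec (m, k + t) r =
      (jac_coeff k k * jac_coeff k k) * unit_vec (m, k) r"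
    by (simp add: algebra_simps)
  then show "unit_vec (m, k) r =
      jac_coeff k k * Jred r k + - (jac_coeff k k * jac_coeff k (k + t)) * unit_vec (m, k + t) r"
    using jac_coeff_diag_square[of k] assms by simp
qed

lemma free_mod_subset_split: "free_mod R \<subseteq> submodule_sum (mat_image C Jred) (free_mod Rfree)"
proof (rule free_mod_subset_if_unit_vecs)
  let ?W = "submodule_sum (mat_image C Jred) (free_mod Rfree)"
  show W: "is_submodule ?W"
    by (rule is_submodule_submodule_sum[OF is_submodule_mat_image is_submodule_free_mod])
  have free: "unit_vec r \<in> ?W" if "r \<in> Rfree" for r
    using unit_vec_free_mod[OF that] submodule_sum_upper2[OF is_submodule_mat_image] by blast
  have last_row: "unit_vec (m, k) \<in> ?W" if "k \<in> C" for k
    using that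
  proof (induction "n - k" arbitrary: k rule: less_induct)
    case less
    have "unit_vec (m, k + t) \<in> ?W"
    proof (cases "k + t \<in> C")
      case True
      moreover have "n - (k + t) < n - k" using True t_pos by auto
      ultimately show ?thesis using less.hyps[of "k + t"] by blast
    next
      case False
      then have "(m, k + t) \<in> Rfree" using less.prems two_le_m by auto
      then show ?thesis by (rule free)
    qed
    moreover have "(\<lambda>r. Jred r k) \<in> ?W"
      using Jred_column_mem[OF less.prems] submodule_sum_upper1[OF is_submodule_free_mod] by blast
    ultimately show ?case
      unfolding unit_vec_last_row_eq[OF less.prems]
      by (intro is_submodule_add[OF W] is_submodule_scale[OF W])
  qed
  show "unit_vec r \<in> ?W" if "r \<in> R" for r
  proof (cases "r \<in> Rfree")
    case False
    with that obtain k where "r = (m, k)" "k \<in> C" by auto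
    then show ?thesis using last_row by simp
  qed (rule free)
qed simp

lemma free_mod_splitE:
  assumes "v \<in> free_mod R"
  obtains y z where "y \<in> free_mod C" "z \<in> free_mod Rfree" "v = (\<lambda>r. z r + mat_vec C Jred y r)"
proof -
  obtain u z where "u \<in> mat_image C Jred" "z \<in> free_mod Rfree" "v = (\<lambda>r. u r + z r)"
    using free_mod_subset_split assms by (blast elim: submodule_sumE)
  then show ?thesis using that unfolding mat_image_def by (auto simp: add.commute)
qed

lemma split_mem_U_iff:
  assumes y: "y \<in> free_mod C" and z: "z \<in> free_mod Rfree"
  shows "(\<lambda>r. z r + mat_vec C Jred y r) \<in> U \<longleftrightarrow> z = (\<lambda>r. 0) \<and> (\<forall>k. Delta dvd y k)"
proof
  assume "(\<lambda>r. z r + mat_vec C Jred y r) \<in> U"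
  then obtain x where x: "x \<in> free_mod C"
    and eq: "(\<lambda>r. z r + mat_vec C Jred y r) = mat_vec C Jred (\<lambda>k. Delta * x k)"
    unfolding U_eq by blast
  have zJ: "z = mat_vec C Jred (\<lambda>k. Delta * x k - y k)"
    unfolding mat_vec_diff using eq by (simp add: fun_eq_iff eq_diff_eq)
  have "(\<lambda>k. Delta * x k - y k) \<in> free_mod C"
    using is_submodule_diff[OF is_submodule_free_mod is_submodule_scale[OF is_submodule_free_mod x] y] .
  from Jred_meets_free_part[OF this, folded zJ, OF z]
  have q0: "(\<lambda>k. Delta * x k - y k) = (\<lambda>k. 0)" .
  then have "z = (\<lambda>r. 0)" using zJ by (simp add: mat_vec_zero)
  moreover have "y k = Delta * x k" for k using fun_cong[OF q0, of k] by simp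
  ultimately show "z = (\<lambda>r. 0) \<and> (\<forall>k. Delta dvd y k)" by simp
next
  assume "z = (\<lambda>r. 0) \<and> (\<forall>k. Delta dvd y k)"
  then obtain x where "x \<in> free_mod C" "y = (\<lambda>k. Delta * x k)" "z = (\<lambda>r. 0)"
    using free_mod_multiple_iff[OF y] by blast
  then show "(\<lambda>r. z r + mat_vec C Jred y r) \<in> U" unfolding U_eq by auto
qed

lemma cls_split_eq_iff:
  assumes "y \<in> free_mod C" "y' \<in> free_mod C" and "z \<in> free_mod Rfree" "z' \<in> free_mod Rfree"
  shows "cls U (\<lambda>r. z r + mat_vec C Jred y r) = cls U (\<lambda>r. z' r + mat_vec C Jred y' r) \<longleftrightarrow>
         z = z' \<and> (\<forall>k. Delta dvd y k - y' k)"
proof -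
  have diff: "(\<lambda>r. (z r + mat_vec C Jred y r) - (z' r + mat_vec C Jred y' r)) =
      (\<lambda>r. (z r - z' r) + mat_vec C Jred (\<lambda>k. y k - y' k) r)"
    unfolding mat_vec_diff by (simp add: algebra_simps)
  have "(\<lambda>r. z r - z' r) = (\<lambda>r. 0) \<longleftrightarrow> z = z'" by (simp add: fun_eq_iff)
  then show ?thesis
    by (simp only: cls_eq_iff[OF is_submodule_mat_image] diff
        split_mem_U_iff[OF is_submodule_diff[OF is_submodule_free_mod assms(1,2)]
          is_submodule_diff[OF is_submodule_free_mod assms(3,4)]])
qed

lemma cls_Jred_eq_iff:
  assumes "y \<in> free_mod C" "y' \<in> free_mod C"
  shows "cls U (mat_vec C Jred y) = cls U (mat_vec C Jred y') \<longleftrightarrow> (\<forall>k. Delta dvd y k - y' k)"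
  using cls_split_eq_iff[OF assms is_submodule_zero[OF is_submodule_free_mod]
      is_submodule_zero[OF is_submodule_free_mod]] by simp

lemma Delta_nonzero: "Delta \<noteq> 0"
  unfolding Delta_eq_power using dvr_nonzero[OF dvr] by simp

lemma torsion_part_eq: "T = (\<lambda>y. cls U (mat_vec C Jred y)) ` free_mod C"
proof
  show "T \<subseteq> (\<lambda>y. cls U (mat_vec C Jred y)) ` free_mod C"
  proof
    fix X assume "X \<in> T"
    then obtain v s where v: "v \<in> free_mod R" "X = cls U v" and s: "s \<noteq> 0" "qscale U s X = qzero U"
      unfolding torsion_part_def coker_def quot_carrier_def by blast
    obtain y z where yz: "y \<in> free_mod C" "z \<in> free_mod Rfree" "v = (\<lambda>r. z r + mat_vec C Jred y r)"
      using free_mod_splitE[OF v(1)] .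
    have "(\<lambda>r. s * v r) \<in> U"
      using s(2) unfolding v(2) qscale_cls[OF is_submodule_mat_image] qzero_def
        cls_eq_iff[OF is_submodule_mat_image] by simp
    moreover have "(\<lambda>r. s * v r) = (\<lambda>r. s * z r + mat_vec C Jred (\<lambda>k. s * y k) r)"
      unfolding yz(3) mat_vec_scale by (simp add: algebra_simps)
    ultimately have "(\<lambda>r. s * z r) = (\<lambda>r. 0)"
      using split_mem_U_iff[OF is_submodule_scale[OF is_submodule_free_mod yz(1)]
          is_submodule_scale[OF is_submodule_free_mod yz(2)]] by simp
    then have "z = (\<lambda>r. 0)" using s(1) by (simp add: fun_eq_iff)
    then show "X \<in> (\<lambda>y. cls U (mat_vec C Jred y)) ` free_mod C"
      using v(2) yz(1,3) by simp
  qed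
next
  show "(\<lambda>y. cls U (mat_vec C Jred y)) ` free_mod C \<subseteq> T"
  proof
    fix X assume "X \<in> (\<lambda>y. cls U (mat_vec C Jred y)) ` free_mod C"
    then obtain y where y: "y \<in> free_mod C" "X = cls U (mat_vec C Jred y)" by blast
    have "X \<in> coker R C J"
      unfolding y(2) coker_def quot_carrier_def using mat_vec_Jred_free_mod by blast
    moreover have "mat_vec C Jred (\<lambda>k. Delta * y k) \<in> U"
      unfolding U_eq using y(1) by blast
    then have "qscale U Delta X = qzero U"
      unfolding y(2) qscale_cls[OF is_submodule_mat_image] qzero_def
        cls_eq_iff[OF is_submodule_mat_image] mat_vec_scale[symmetric] by simp
    ultimately show "X \<in> T" unfolding torsion_part_def using Delta_nonzero by blast
  qed
qed

lemma torsion_partE: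
  assumes "X \<in> T"
  obtains y where "y \<in> free_mod C" "X = cls U (mat_vec C Jred y)"
  using assms unfolding torsion_part_eq by blast

lemma qadd_torsion_part:
  assumes "X \<in> T" "Y \<in> T"
  shows "qadd U X Y \<in> T"
proof -
  obtain x where x: "x \<in> free_mod C" "X = cls U (mat_vec C Jred x)"
    using assms(1) by (rule torsion_partE)
  obtain y where y: "y \<in> free_mod C" "Y = cls U (mat_vec C Jred y)"
    using assms(2) by (rule torsion_partE)
  have "qadd U X Y = cls U (mat_vec C Jred (\<lambda>k. x k + y k))"
    unfolding x(2) y(2) qadd_cls[OF is_submodule_mat_image] mat_vec_add by simp
  moreover have "(\<lambda>k. x k + y k) \<in> free_mod C"
    by (rule is_submodule_add[OF is_submodule_free_mod x(1) y(1)])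
  ultimately show ?thesis unfolding torsion_part_eq by blast
qed

lemma qscale_torsion_part:
  assumes "X \<in> T"
  shows "qscale U s X \<in> T"
proof -
  obtain x where x: "x \<in> free_mod C" "X = cls U (mat_vec C Jred x)"
    using assms by (rule torsion_partE)
  have "qscale U s X = cls U (mat_vec C Jred (\<lambda>k. s * x k))"
    unfolding x(2) qscale_cls[OF is_submodule_mat_image] mat_vec_scale by simp
  moreover have "(\<lambda>k. s * x k) \<in> free_mod C"
    by (rule is_submodule_scale[OF is_submodule_free_mod x(1)])
  ultimately show ?thesis unfolding torsion_part_eq by blast
qed

lemma card_Rfree: "card Rfree = m * n - (n - t)"
proof -
  have "{m} \<times> C \<subseteq> R" using two_le_m m_le_n by auto
  then show ?thesis by (simp add: card_Diff_subset card_cartesian_product)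
qed

lemma inj_on_free_part_times_torsion:
  fixes \<rho> :: "'i \<Rightarrow> nat \<times> nat"
  assumes \<rho>: "bij_betw \<rho> I Rfree"
  shows "inj_on (\<lambda>(z, X). qadd U (cls U (transport \<rho> I z)) X) (free_mod I \<times> T)"
proof (rule inj_onI, unfold split_paired_all)
  have tr: "bij_betw (transport \<rho> I) (free_mod I) (free_mod Rfree)"
    by (rule bij_betw_transport[OF \<rho>])
  fix z X z' X'
  assume p: "(z, X) \<in> free_mod I \<times> T" "(z', X') \<in> free_mod I \<times> T"
    and eq: "(case (z, X) of (z, X) \<Rightarrow> qadd U (cls U (transport \<rho> I z)) X) =
             (case (z', X') of (z, X) \<Rightarrow> qadd U (cls U (transport \<rho> I z)) X)"
  then have z: "z \<in> free_mod I" "z' \<in> free_mod I" and "X \<in> T" "X' \<in> T" by simp_all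
  obtain y where y: "y \<in> free_mod C" "X = cls U (mat_vec C Jred y)"
    using \<open>X \<in> T\<close> by (rule torsion_partE)
  obtain y' where y': "y' \<in> free_mod C" "X' = cls U (mat_vec C Jred y')"
    using \<open>X' \<in> T\<close> by (rule torsion_partE)
  have "transport \<rho> I z \<in> free_mod Rfree" "transport \<rho> I z' \<in> free_mod Rfree"
    using bij_betwE[OF tr] z by blast+
  from iffD1[OF cls_split_eq_iff[OF y(1) y'(1) this]
      eq[unfolded y(2) y'(2) prod.case qadd_cls[OF is_submodule_mat_image]]]
  have tr_eq: "transport \<rho> I z = transport \<rho> I z'" and dvd: "\<forall>k. Delta dvd y k - y' k" by blast+
  have "z = z'" using inj_onD[OF bij_betw_imp_inj_on[OF tr] tr_eq z] .
  moreover have "X = X'" unfolding y(2) y'(2) cls_Jred_eq_iff[OF y(1) y'(1)] by (rule dvd)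
  ultimately show "(z, X) = (z', X')" by simp
qed

lemma image_free_part_times_torsion:
  fixes \<rho> :: "'i \<Rightarrow> nat \<times> nat"
  assumes \<rho>: "bij_betw \<rho> I Rfree"
  shows "(\<lambda>(z, X). qadd U (cls U (transport \<rho> I z)) X) ` (free_mod I \<times> T) = coker R C J"
    (is "?\<psi> ` _ = _")
proof
  have tr: "bij_betw (transport \<rho> I) (free_mod I) (free_mod Rfree)"
    by (rule bij_betw_transport[OF \<rho>])
  have \<psi>_cls: "?\<psi> (z, cls U (mat_vec C Jred y)) = cls U (\<lambda>r. transport \<rho> I z r + mat_vec C Jred y r)"
    for z y by (simp add: qadd_cls[OF is_submodule_mat_image])
  show "?\<psi> ` (free_mod I \<times> T) \<subseteq> coker R C J"
  proof (rule image_subsetI)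
    fix p :: "('i \<Rightarrow> 'a) \<times> (nat \<times> nat \<Rightarrow> 'a) set" assume "p \<in> free_mod I \<times> T"
    then obtain z X where zX: "p = (z, X)" "z \<in> free_mod I" "X \<in> T" by (cases p) simp
    obtain y where y: "y \<in> free_mod C" "X = cls U (mat_vec C Jred y)"
      using zX(3) by (rule torsion_partE)
    have "transport \<rho> I z \<in> free_mod Rfree" using bij_betwE[OF tr] zX(2) by blast
    then have "transport \<rho> I z \<in> free_mod R" unfolding free_mod_def by blast
    then have "(\<lambda>r. transport \<rho> I z r + mat_vec C Jred y r) \<in> free_mod R"
      using is_submodule_add[OF is_submodule_free_mod _ mat_vec_Jred_free_mod] by blast
    then show "?\<psi> p \<in> coker R C J"
      unfolding zX(1) y(2) \<psi>_cls coker_def quot_carrier_def by blast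
  qed
  show "coker R C J \<subseteq> ?\<psi> ` (free_mod I \<times> T)"
  proof
    fix Y assume "Y \<in> coker R C J"
    then obtain v where v: "v \<in> free_mod R" "Y = cls U v"
      unfolding coker_def quot_carrier_def by blast
    obtain y z' where yz: "y \<in> free_mod C" "z' \<in> free_mod Rfree" "v = (\<lambda>r. z' r + mat_vec C Jred y r)"
      using free_mod_splitE[OF v(1)] .
    have "z' \<in> transport \<rho> I ` free_mod I" unfolding bij_betw_imp_surj_on[OF tr] by (rule yz(2))
    then obtain z where z: "z \<in> free_mod I" "transport \<rho> I z = z'" by blast
    have "cls U (mat_vec C Jred y) \<in> T" unfolding torsion_part_eq using yz(1) by blast
    moreover have "Y = ?\<psi> (z, cls U (mat_vec C Jred y))"
      unfolding \<psi>_cls v(2) yz(3) z(2) ..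
    ultimately show "Y \<in> ?\<psi> ` (free_mod I \<times> T)"
      using z(1) by (intro rev_image_eqI[of "(z, cls U (mat_vec C Jred y))"]) simp_all
  qed
qed

lemma mod_iso_coker:
  "mod_iso (coker R C J) (qadd U) (qscale U)
     (free_mod {..<card Rfree} \<times> T)
     (\<lambda>(v, X) (v', X'). ((\<lambda>i. v i + v' i), qadd U X X'))
     (\<lambda>s (v, X). ((\<lambda>i. s * v i), qscale U s X))"
proof -
  obtain \<rho> :: "nat \<Rightarrow> nat \<times> nat" where \<rho>: "bij_betw \<rho> {..<card Rfree} Rfree"
    using ex_bij_betw_nat_finite[of Rfree] by (auto simp: atLeast0LessThan)
  let ?tr = "transport \<rho> {..<card Rfree}"
  have "bij_betw (\<lambda>(z, X). qadd U (cls U (?tr z)) X) (free_mod {..<card Rfree} \<times> T) (coker R C J)"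
    using inj_on_free_part_times_torsion[OF \<rho>] image_free_part_times_torsion[OF \<rho>]
    unfolding bij_betw_def ..
  then show ?thesis
  proof (rule mod_iso_from_inverse; clarify)
    fix z z' :: "nat \<Rightarrow> 'a" and X X'
    assume "z \<in> free_mod {..<card Rfree}" "X \<in> T" "z' \<in> free_mod {..<card Rfree}" "X' \<in> T"
    then show "(\<lambda>i. z i + z' i) \<in> free_mod {..<card Rfree} \<and> qadd U X X' \<in> T"
      using is_submodule_add[OF is_submodule_free_mod] qadd_torsion_part by blast
  next
    fix s and z :: "nat \<Rightarrow> 'a" and X assume "z \<in> free_mod {..<card Rfree}" "X \<in> T"
    then show "(\<lambda>i. s * z i) \<in> free_mod {..<card Rfree} \<and> qscale U s X \<in> T"
      using is_submodule_scale[OF is_submodule_free_mod] qscale_torsion_part by blast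
  next
    fix z z' :: "nat \<Rightarrow> 'a" and X X' assume "X \<in> T" "X' \<in> T"
    then obtain y y' where y: "X = cls U (mat_vec C Jred y)" "X' = cls U (mat_vec C Jred y')"
      by (metis torsion_partE)
    show "qadd U (cls U (?tr (\<lambda>i. z i + z' i))) (qadd U X X') =
        qadd U (qadd U (cls U (?tr z)) X) (qadd U (cls U (?tr z')) X')"
      unfolding y qadd_cls[OF is_submodule_mat_image] transport_add by (simp add: ac_simps)
  next
    fix s and z :: "nat \<Rightarrow> 'a" and X assume "X \<in> T"
    then obtain y where y: "X = cls U (mat_vec C Jred y)" by (metis torsion_partE)
    show "qadd U (cls U (?tr (\<lambda>i. s * z i))) (qscale U s X) = qscale U s (qadd U (cls U (?tr z)) X)"
      unfolding y qadd_cls[OF is_submodule_mat_image] qscale_cls[OF is_submodule_mat_image]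
        transport_scale by (simp add: algebra_simps)
  qed
qed

lemma has_length_torsion_part: "has_length T (qadd U) (qscale U) (qzero U) ((n - t) * weight)"
proof -
  interpret quotient_of_composition_series "\<lambda>i. val_ge_submodule pi C (staircase weight i)"
    "(n - t) * weight" "\<lambda>y. cls U (mat_vec C Jred y)" T "qadd U" "qscale U" "qzero U"
  proof
    show "is_submodule (val_ge_submodule pi C (staircase weight i))" for i
      by (rule is_submodule_val_ge_submodule)
    show "val_ge_submodule pi C (staircase weight i) \<subset> val_ge_submodule pi C (staircase weight (Suc i))"
      if "i < (n - t) * weight" for i
      by (rule val_ge_staircase_psubset[OF dvr that])
    show "V = val_ge_submodule pi C (staircase weight i) \<or> V = val_ge_submodule pi C (staircase weight (Suc i))"
      if "i < (n - t) * weight" "is_submodule V" "val_ge_submodule pi C (staircase weight i) \<subseteq> V"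
        "V \<subseteq> val_ge_submodule pi C (staircase weight (Suc i))" for i V
      by (rule val_ge_staircase_cover[OF dvr that])
    show "(\<lambda>y. cls U (mat_vec C Jred y)) ` val_ge_submodule pi C (staircase weight ((n - t) * weight)) = T"
      unfolding val_ge_staircase_top torsion_part_eq ..
    show "cls U (mat_vec C Jred (\<lambda>i. x i + y i)) = qadd U (cls U (mat_vec C Jred x)) (cls U (mat_vec C Jred y))"
      for x y by (simp add: qadd_cls[OF is_submodule_mat_image] mat_vec_add)
    show "cls U (mat_vec C Jred (\<lambda>i. s * x i)) = qscale U s (cls U (mat_vec C Jred x))"
      for s x by (simp add: qscale_cls[OF is_submodule_mat_image] mat_vec_scale)
    show "cls U (mat_vec C Jred (\<lambda>i. 0)) = qzero U"
      by (simp add: qzero_def mat_vec_zero)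
    show "cls U (mat_vec C Jred x) = cls U (mat_vec C Jred y) \<longleftrightarrow>
        (\<lambda>i. x i - y i) \<in> val_ge_submodule pi C (staircase weight 0)"
      if "x \<in> val_ge_submodule pi C (staircase weight ((n - t) * weight))"
        "y \<in> val_ge_submodule pi C (staircase weight ((n - t) * weight))" for x y
    proof -
      have xy: "x \<in> free_mod C" "y \<in> free_mod C" "(\<lambda>i. x i - y i) \<in> free_mod C"
        using that is_submodule_diff[OF is_submodule_free_mod] unfolding val_ge_staircase_top by auto
      show ?thesis
        unfolding cls_Jred_eq_iff[OF xy(1,2)] val_ge_staircase_0 Delta_eq_power
        using xy(3) unfolding val_ge_submodule_def free_mod_def by auto
    qed
  qed
  show ?thesis by (rule has_length)
qed

end

theorem corollary5p7:
  fixes pi :: "'a::idom" and m n :: nat and e :: "nat \<Rightarrow> nat"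
  assumes "dvr pi"
    and "2 \<le> m" and "m \<le> n"
    and "\<And>i j. 1 \<le> i \<Longrightarrow> i \<le> j \<Longrightarrow> j \<le> m - 1 \<Longrightarrow> e i \<le> e j"
  shows "let t = m - 1;
             R = {1..m} \<times> {1..n};
             C = {1..n - t};
             J = jac_eval m n (pt pi m e);
             U = mat_image C J;
             M = coker R C J;
             T = torsion_part R C J;
             w = val pi (\<Prod>i = 1..t. pi ^ e i)
         in mod_iso M (qadd U) (qscale U)
              (free_mod {..<m * n - (n - t)} \<times> T)
              (\<lambda>(v, X) (v', X'). ((\<lambda>i. v i + v' i), qadd U X X'))
              (\<lambda>s (v, X). ((\<lambda>i. s * v i), qscale U s X))
          \<and> has_length T (qadd U) (qscale U) (qzero U) ((n - t) * w)"
proof -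
  interpret jacobian_at_point pi m n e
    using assms(1-3) by unfold_locales
  have val_Delta: "val pi (\<Prod>i = 1..m - 1. pi ^ e i) = weight"
    using val_power[OF dvr] Delta_eq_power unfolding Delta_def by simp
  show ?thesis
    unfolding Let_def val_Delta using mod_iso_coker[unfolded card_Rfree] has_length_torsion_part
    by (intro conjI)
qed

end
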